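(* Let $\mathfrak g$ be an almost abelian Lie algebra of real dimension $2n$ with a Hermitian structure $(J,g)$. Then there exists a unitary coframe $\varphi_1,\dots,\varphi_n$ of $(1,0)$-forms, a real number $\lambda$, a vector $v=(v_2,\dots,v_n)^t\in\mathbb C^{n-1}$ and a matrix $A=(A_{ij})_{2\le i,j\le n}\in M_{n-1}(\mathbb C)$ such that $$d\varphi_1=-\lambda\,\varphi_1\wedge\bar\varphi_1,\qquad d\varphi_i=-\bar v_i\,\varphi_1\wedge\bar\varphi_1+\sum_{j=2}^n\overline{A_{ij}}\,(\varphi_1+\bar\varphi_1)\wedge\varphi_j,\quad 2\le i\le n.$$
   Context: A Hermitian structure on a real Lie algebra $\mathfrak g$ is an integrable almost complex structure $J$ (i.e. $[x,y]-[Jx,Jy]+J[Jx,y]+J[x,Jy]=0$) together with a $J$-invariant inner product $g$. $\mathfrak g^{1,0}=\{x-\sqrt{-1}Jx\}$; $g$ is extended complex-bilinearly; a unitary coframe is the dual of a basis $e_1,\dots,e_n$ of $\mathfrak g^{1,0}$ with $g(e_i,\bar e_j)=\delta_{ij}$. $d$ is the Chevalley–Eilenberg differential ($d\alpha(x,y)=-\alpha([x,y])$). $\mathfrak g$ is almost abelian if it is non-abelian and contains an abelian ideal of codimension one. *)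

theory Defs
  imports "HOL-Analysis.Analysis"
begin

definition lie_algebra :: "('a::euclidean_space \<Rightarrow> 'a \<Rightarrow> 'a) \<Rightarrow> bool" where
  "lie_algebra br \<longleftrightarrow> bilinear br \<and> (\<forall>x y. br x y = - br y x)
     \<and> (\<forall>x y z. br x (br y z) + br y (br z x) + br z (br x y) = 0)"

definition almost_abelian :: "('a::euclidean_space \<Rightarrow> 'a \<Rightarrow> 'a) \<Rightarrow> bool" where
  "almost_abelian br \<longleftrightarrow> (\<exists>x y. br x y \<noteq> 0) \<and>
     (\<exists>h. subspace h \<and> dim h + 1 = DIM('a) \<and> (\<forall>x y. x \<in> h \<longrightarrow> br x y \<in> h)
        \<and> (\<forall>x\<in>h. \<forall>y\<in>h. br x y = 0))"

text \<open>Hermitian structure: integrable almost complex structure J and J-invariant inner product g.\<close>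
definition hermitian_structure ::
  "('a::euclidean_space \<Rightarrow> 'a \<Rightarrow> 'a) \<Rightarrow> ('a \<Rightarrow> 'a) \<Rightarrow> ('a \<Rightarrow> 'a \<Rightarrow> real) \<Rightarrow> bool" where
  "hermitian_structure br J g \<longleftrightarrow>
     linear J \<and> (\<forall>x. J (J x) = - x) \<and>
     (\<forall>x y. br x y - br (J x) (J y) + J (br (J x) y) + J (br x (J y)) = 0) \<and>
     bilinear g \<and> (\<forall>x y. g x y = g y x) \<and> (\<forall>x. x \<noteq> 0 \<longrightarrow> g x x > 0) \<and>
     (\<forall>x y. g (J x) (J y) = g x y)"

text \<open>Complexification: a pair (a,b) of real vectors stands for a + sqrt(-1) b.\<close>
definition cconj :: "'a::real_vector \<times> 'a \<Rightarrow> 'a \<times> 'a" where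
  "cconj p = (fst p, - snd p)"

definition gC :: "('a \<Rightarrow> 'a \<Rightarrow> real) \<Rightarrow> 'a \<times> 'a \<Rightarrow> 'a \<times> 'a \<Rightarrow> complex" where
  "gC g p q = Complex (g (fst p) (fst q) - g (snd p) (snd q)) (g (fst p) (snd q) + g (snd p) (fst q))"

definition fC :: "('a \<Rightarrow> complex) \<Rightarrow> 'a \<times> 'a \<Rightarrow> complex" where
  "fC \<phi> p = \<phi> (fst p) + \<i> * \<phi> (snd p)"

definition e10 :: "('a::real_vector \<Rightarrow> 'a) \<Rightarrow> 'a \<Rightarrow> 'a \<times> 'a" where
  "e10 J x = (x, - J x)"

text \<open>phi_1..phi_n is a unitary coframe of (1,0)-forms: it is the dual coframe of a basis
  e_1..e_n of g^{1,0} (e_j = x_j - sqrt(-1) J x_j) with g(e_i, conj e_j) = delta_ij.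
  A complex 1-form is a real-linear map 'a \<Rightarrow> complex (complex-linearly extended).\<close>
definition unitary_coframe ::
  "('a::euclidean_space \<Rightarrow> 'a) \<Rightarrow> ('a \<Rightarrow> 'a \<Rightarrow> real) \<Rightarrow> nat \<Rightarrow> (nat \<Rightarrow> 'a \<Rightarrow> complex) \<Rightarrow> bool" where
  "unitary_coframe J g n \<phi> \<longleftrightarrow>
     (\<forall>i\<in>{1..n}. linear (\<phi> i)) \<and>
     (\<exists>X :: nat \<Rightarrow> 'a. \<forall>i\<in>{1..n}. \<forall>j\<in>{1..n}.
        gC g (e10 J (X i)) (cconj (e10 J (X j))) = (if i = j then 1 else 0) \<and>
        fC (\<phi> i) (e10 J (X j)) = (if i = j then 1 else 0) \<and>
        fC (\<phi> i) (cconj (e10 J (X j))) = 0)"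

text \<open>Conjugate form, wedge product of 1-forms, Chevalley-Eilenberg differential of a 1-form
  (2-forms represented by their values on pairs of real vectors).\<close>
definition cform :: "('a \<Rightarrow> complex) \<Rightarrow> 'a \<Rightarrow> complex" where
  "cform \<alpha> x = cnj (\<alpha> x)"

definition wedge :: "('a \<Rightarrow> complex) \<Rightarrow> ('a \<Rightarrow> complex) \<Rightarrow> 'a \<Rightarrow> 'a \<Rightarrow> complex" where
  "wedge \<alpha> \<beta> x y = \<alpha> x * \<beta> y - \<alpha> y * \<beta> x"

definition dform :: "('a \<Rightarrow> 'a \<Rightarrow> 'a) \<Rightarrow> ('a \<Rightarrow> complex) \<Rightarrow> 'a \<Rightarrow> 'a \<Rightarrow> complex" where
  "dform br \<alpha> x y = - \<alpha> (br x y)"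

end

theory Submission
  imports Defs
begin

text \<open>Pick a \<open>g\<close>-normal \<open>X\<^sub>1\<close> to the abelian ideal \<open>h\<close>, normalized by \<open>g(X\<^sub>1,X\<^sub>1) = 1/2\<close>, and
  complete it to a unitary frame \<open>X\<^sub>1, J X\<^sub>1, \<dots>, X\<^sub>n, J X\<^sub>n\<close>; then \<open>J X\<^sub>1\<close> and all \<open>X\<^sub>k, J X\<^sub>k\<close>
  (\<open>k \<ge> 2\<close>) lie in \<open>h\<close>. Since \<open>h\<close> is abelian, every bracket is \<open>ad X\<^sub>1\<close> applied to
  \<open>h\<close>-components, and integrability shows that \<open>ad X\<^sub>1\<close> commutes with \<open>J\<close> on
  \<open>span {X\<^sub>k, J X\<^sub>k | k \<ge> 2}\<close>, so in the dual coframe it acts complex-linearly. Finally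
  \<open>\<phi>\<^sub>1\<close> vanishes on \<open>h \<inter> J h\<close>, which leaves only the \<open>\<phi>\<^sub>1 \<and> cnj \<phi>\<^sub>1\<close> term in \<open>d\<phi>\<^sub>1\<close>.\<close>

text \<open>Riesz: \<open>g y = \<langle>F y, -\<rangle>\<close> with \<open>F\<close> injective, hence onto; pull back a Euclidean normal of \<open>S\<close>.\<close>
lemma bilinear_positive_orthogonal_exists:
  fixes g :: "'a::euclidean_space \<Rightarrow> 'a \<Rightarrow> real"
  assumes bl: "bilinear g" and pos: "\<And>x. x \<noteq> 0 \<Longrightarrow> g x x > 0" and dim: "dim S < DIM('a)"
  shows "\<exists>y. y \<noteq> 0 \<and> (\<forall>v\<in>S. g y v = 0)"
proof -
  define F where "F y = (\<Sum>b\<in>Basis. g y b *\<^sub>R b)" for y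
  have rep: "g y x = F y \<bullet> x" for y x
  proof -
    have lin: "linear (g y)" using bl by (simp add: bilinear_def)
    have "g y x = g y (\<Sum>b\<in>Basis. (x \<bullet> b) *\<^sub>R b)" by (simp add: euclidean_representation)
    also have "\<dots> = (\<Sum>b\<in>Basis. g y b * (b \<bullet> x))"
      by (simp add: linear_sum[OF lin] linear_scale[OF lin] inner_commute mult.commute)
    finally show ?thesis by (simp add: F_def inner_sum_left)
  qed
  have linF: "linear F"
    by (rule linearI)
      (simp_all add: F_def bilinear_ladd[OF bl] bilinear_lmul[OF bl] scaleR_add_left sum.distrib
        scaleR_sum_right)
  have "inj F"
  proof (rule injI)
    fix a b assume "F a = F b"
    then have "g (a - b) (a - b) = 0" using rep linear_diff[OF linF] by simp
    then show "a = b" using pos[of "a - b"] by auto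
  qed
  then have "surj F" using linear_injective_imp_surjective[OF linF] by simp
  obtain x where x: "x \<noteq> 0" "\<And>y. y \<in> span S \<Longrightarrow> orthogonal x y"
    using orthogonal_to_subspace_exists[OF dim] by blast
  obtain y where y: "F y = x" using \<open>surj F\<close> by (metis surjD)
  have "y \<noteq> 0" using y x linear_0[OF linF] by auto
  moreover have "\<forall>v\<in>S. g y v = 0" using x(2) y rep by (simp add: orthogonal_def span_base)
  ultimately show ?thesis by blast
qed

locale hermitian_metric =
  fixes g :: "'a::euclidean_space \<Rightarrow> 'a \<Rightarrow> real" and J :: "'a \<Rightarrow> 'a"
  assumes bilinear_g: "bilinear g" and g_sym: "g x y = g y x" and g_pos: "x \<noteq> 0 \<Longrightarrow> g x x > 0"
    and linear_J: "linear J" and J_J [simp]: "J (J x) = - x" and g_J_J [simp]: "g (J x) (J y) = g x y"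
begin

lemma g_simps [simp]:
  "g (x + y) z = g x z + g y z" "g z (x + y) = g z x + g z y"
  "g (x - y) z = g x z - g y z" "g z (x - y) = g z x - g z y"
  "g (c *\<^sub>R x) z = c * g x z" "g z (c *\<^sub>R x) = c * g z x"
  "g (- x) z = - g x z" "g z (- x) = - g z x" "g 0 z = 0" "g z 0 = 0"
  using bilinear_g by (simp_all add: bilinear_ladd bilinear_radd bilinear_lsub bilinear_rsub
      bilinear_lmul bilinear_rmul bilinear_lneg bilinear_rneg bilinear_lzero bilinear_rzero)

lemma J_simps [simp]:
  "J (x + y) = J x + J y" "J (x - y) = J x - J y" "J (c *\<^sub>R x) = c *\<^sub>R J x"
  "J (- x) = - J x" "J 0 = 0"
  using linear_J by (simp_all add: linear_add linear_diff linear_scale linear_neg linear_0)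

lemma g_sum_left: "g (\<Sum>i\<in>A. f i) z = (\<Sum>i\<in>A. g (f i) z)"
  by (induction A rule: infinite_finite_induct) auto

lemma g_J_left: "g (J x) y = - g x (J y)"
  using g_J_J[of x "J y"] by simp

lemma g_J_right: "g x (J y) = - g (J x) y"
  by (simp add: g_J_left)

lemma g_J_self [simp]: "g x (J x) = 0" "g (J x) x = 0"
  using g_J_left[of x x] g_sym[of x "J x"] by simp_all

lemma g_orthogonal_span:
  assumes "\<forall>v\<in>V. g r v = 0" and "u \<in> span V"
  shows "g r u = 0"
proof -
  have "span V \<subseteq> {u. g r u = 0}"
    using assms(1) by (intro span_minimal) (auto simp: subspace_def)
  then show ?thesis using assms(2) by blast
qed

lemma half_norm_orthogonal_exists:
  assumes "dim S < DIM('a)"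
  shows "\<exists>y. g y y = 1/2 \<and> (\<forall>v\<in>S. g y v = 0)"
proof -
  obtain y where y: "y \<noteq> 0" "\<forall>v\<in>S. g y v = 0"
    using bilinear_positive_orthogonal_exists[OF bilinear_g g_pos assms] by blast
  define c where "c = inverse (sqrt (2 * g y y))"
  have "c * c * g y y = 1/2"
    using g_pos[OF y(1)] by (simp add: c_def field_simps flip: inverse_mult_distrib)
  then have "g (c *\<^sub>R y) (c *\<^sub>R y) = 1/2" by (simp add: mult.assoc)
  then show ?thesis using y(2) by (intro exI[of _ "c *\<^sub>R y"]) simp
qed

text \<open>The normalization \<open>g(X\<^sub>i, X\<^sub>i) = 1/2\<close> is what makes \<open>e\<^sub>i = X\<^sub>i - \<i> J X\<^sub>i\<close> satisfy
  \<open>g(e\<^sub>i, conj e\<^sub>i) = 1\<close>.\<close>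
definition unitary_frame :: "nat \<Rightarrow> (nat \<Rightarrow> 'a) \<Rightarrow> bool" where
  "unitary_frame k X \<longleftrightarrow> (\<forall>i\<in>{1..k}. \<forall>j\<in>{1..k}.
      g (X i) (X j) = (if i = j then 1/2 else 0) \<and> g (X i) (J (X j)) = 0)"

lemma unitary_frame_extend:
  assumes X: "unitary_frame k X" and dim: "2 * k < DIM('a)"
  shows "\<exists>Y. unitary_frame (Suc k) (X(Suc k := Y))"
proof -
  define S where "S = X ` {1..k} \<union> (\<lambda>i. J (X i)) ` {1..k}"
  have "card S \<le> card (X ` {1..k}) + card ((\<lambda>i. J (X i)) ` {1..k})"
    unfolding S_def by (rule card_Un_le)
  also have "\<dots> \<le> 2 * k"
    using card_image_le[of "{1..k}" X] card_image_le[of "{1..k}" "\<lambda>i. J (X i)"] by simp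
  finally have "dim S < DIM('a)"
    using dim dim_le_card[of S S] by (simp add: S_def span_base subsetI)
  then obtain Y where YY: "g Y Y = 1/2" and Y: "\<forall>v\<in>S. g Y v = 0"
    using half_norm_orthogonal_exists by blast
  have "g Y (X j) = 0" "g (X j) Y = 0" "g Y (J (X j)) = 0" "g (X j) (J Y) = 0"
    if "j \<in> {1..k}" for j
    using Y that g_sym[of Y] g_J_right[of "X j" Y] g_J_left[of Y] by (auto simp: S_def)
  then show ?thesis
    using X YY by (intro exI[of _ Y]) (auto simp: unitary_frame_def le_Suc_eq)
qed

lemma unitary_frame_exists:
  assumes "DIM('a) = 2 * n" and "g x x = 1/2"
  shows "\<exists>X. X 1 = x \<and> unitary_frame n X"
proof -
  have "\<exists>X. X 1 = x \<and> unitary_frame k X" if "1 \<le> k" "k \<le> n" for k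
    using that
  proof (induction k rule: nat_induct_at_least)
    case base
    show ?case using assms(2) by (intro exI[of _ "\<lambda>_. x"]) (auto simp: unitary_frame_def)
  next
    case (Suc k)
    then obtain X where X: "X 1 = x" "unitary_frame k X" by auto
    have "2 * k < DIM('a)" using Suc.prems assms(1) by linarith
    then obtain Y where "unitary_frame (Suc k) (X(Suc k := Y))"
      using unitary_frame_extend[OF X(2)] by blast
    moreover have "(X(Suc k := Y)) 1 = x" using Suc.hyps X(1) by simp
    ultimately show ?case by blast
  qed
  moreover have "1 \<le> n" using assms(1) DIM_positive[where 'a='a] by linarith
  ultimately show ?thesis by blast
qed

definition frame_vector :: "(nat \<Rightarrow> 'a) \<Rightarrow> nat \<times> bool \<Rightarrow> 'a" where
  "frame_vector X p = (if snd p then J (X (fst p)) else X (fst p))"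

lemma unitary_frame_gram:
  assumes "unitary_frame n X" and "p \<in> {1..n} \<times> UNIV" and "q \<in> {1..n} \<times> UNIV"
  shows "g (frame_vector X p) (frame_vector X q) = (if p = q then 1/2 else 0)"
  using assms g_sym[of "J (X (fst p))" "X (fst q)"]
  by (cases p; cases q) (auto simp: unitary_frame_def frame_vector_def g_J_left)

lemma unitary_frame_spans:
  assumes "DIM('a) = 2 * n" and X: "unitary_frame n X"
  shows "span (frame_vector X ` ({1..n} \<times> UNIV)) = UNIV"
proof -
  let ?I = "{1..n} \<times> (UNIV :: bool set)"
  have inj: "inj_on (frame_vector X) ?I"
    by (rule inj_onI) (metis unitary_frame_gram[OF X] zero_neq_numeral divide_eq_0_iff one_neq_zero)
  have "independent (frame_vector X ` ?I)"
    unfolding dependent_def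
  proof
    assume "\<exists>a\<in>frame_vector X ` ?I. a \<in> span (frame_vector X ` ?I - {a})"
    then obtain p where p: "p \<in> ?I" "frame_vector X p \<in> span (frame_vector X ` ?I - {frame_vector X p})"
      by blast
    have "g (frame_vector X p) (frame_vector X q) = 0"
      if "q \<in> ?I" "frame_vector X q \<noteq> frame_vector X p" for q
      using that unitary_frame_gram[OF X p(1) that(1)] by auto
    then have "g (frame_vector X p) (frame_vector X p) = 0"
      by (intro g_orthogonal_span[OF _ p(2)]) blast
    then show False using unitary_frame_gram[OF X p(1) p(1)] by simp
  qed
  moreover have "card (frame_vector X ` ?I) = DIM('a)"
    using assms(1) card_image[OF inj] by (simp add: card_cartesian_product)
  ultimately show ?thesis
    by (metis dim_eq_full dim_span_eq_card_independent dim_span)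
qed

lemma unitary_frame_expansion:
  assumes "DIM('a) = 2 * n" and X: "unitary_frame n X"
  shows "x = (\<Sum>k=1..n. (2 * g x (X k)) *\<^sub>R X k + (2 * g x (J (X k))) *\<^sub>R J (X k))"
proof -
  let ?I = "{1..n} \<times> (UNIV :: bool set)"
  define r where "r = x - (\<Sum>p\<in>?I. (2 * g x (frame_vector X p)) *\<^sub>R frame_vector X p)"
  have "g r (frame_vector X q) = 0" if "q \<in> ?I" for q
  proof -
    have "(\<Sum>p\<in>?I. 2 * g x (frame_vector X p) * g (frame_vector X p) (frame_vector X q))
        = (\<Sum>p\<in>?I. if p = q then g x (frame_vector X q) else 0)"
      by (rule sum.cong) (auto simp: unitary_frame_gram[OF X _ that])
    also have "\<dots> = g x (frame_vector X q)" using that by simp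
    finally show ?thesis by (simp add: r_def g_sum_left)
  qed
  then have "g r r = 0"
    using g_orthogonal_span unitary_frame_spans[OF assms] by blast
  then have "r = 0" using g_pos by force
  then show ?thesis
    by (simp add: r_def sum.cartesian_product' UNIV_bool frame_vector_def add.commute)
qed

lemma adapted_unitary_frame_exists:
  assumes h: "subspace h" and codim: "dim h + 1 = DIM('a)" and dim: "DIM('a) = 2 * n"
  shows "\<exists>X. unitary_frame n X \<and> (\<forall>x. x \<in> h \<longleftrightarrow> g x (X 1) = 0)"
proof -
  obtain x1 where x1: "g x1 x1 = 1/2" and perp: "\<forall>v\<in>h. g x1 v = 0"
    using half_norm_orthogonal_exists[of h] codim by auto
  have span_h: "span h = h" using h by (rule span_eq_iff[THEN iffD2])
  have "x1 \<notin> span h" using x1 perp span_h by (metis divide_eq_0_iff one_neq_zero zero_neq_numeral)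
  then have "span (insert x1 h) = UNIV"
    using codim dim_insert[of x1 h] dim_eq_full[of "insert x1 h"] by simp
  then have decomp: "\<exists>k. x - k *\<^sub>R x1 \<in> h" for x
    using span_h span_insert[of x1 h] by blast
  have "x \<in> h \<longleftrightarrow> g x x1 = 0" for x
  proof
    assume "x \<in> h" then show "g x x1 = 0" using perp g_sym by metis
  next
    assume x: "g x x1 = 0"
    obtain k where k: "x - k *\<^sub>R x1 \<in> h" using decomp by blast
    then have "g (x - k *\<^sub>R x1) x1 = 0" using perp g_sym by metis
    then have "k = 0" using x x1 by simp
    then show "x \<in> h" using k by simp
  qed
  moreover obtain X where "X 1 = x1" "unitary_frame n X"
    using unitary_frame_exists[OF dim x1] by blast
  ultimately show ?thesis by auto
qed

text \<open>Complex-linearly extended, \<open>frame_coform X i\<close> is the coframe dual to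
  \<open>e\<^sub>i = X\<^sub>i - \<i> J X\<^sub>i\<close>.\<close>
definition frame_coform :: "(nat \<Rightarrow> 'a) \<Rightarrow> nat \<Rightarrow> 'a \<Rightarrow> complex" where
  "frame_coform X i y = of_real (g y (X i)) + \<i> * of_real (g y (J (X i)))"

lemma frame_coform_add: "frame_coform X i (x + y) = frame_coform X i x + frame_coform X i y"
  and frame_coform_diff: "frame_coform X i (x - y) = frame_coform X i x - frame_coform X i y"
  and frame_coform_scaleR: "frame_coform X i (c *\<^sub>R x) = of_real c * frame_coform X i x"
  by (simp_all add: frame_coform_def algebra_simps)

lemma linear_frame_coform: "linear (frame_coform X i)"
  by (rule linearI) (simp_all add: frame_coform_add frame_coform_scaleR scaleR_conv_of_real)

lemma frame_coform_J: "frame_coform X i (J x) = \<i> * frame_coform X i x"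
  by (simp add: frame_coform_def g_J_left algebra_simps)

lemma unitary_coframe_frame_coform:
  assumes "unitary_frame n X"
  shows "unitary_coframe J g n (frame_coform X)"
  unfolding unitary_coframe_def
proof (intro conjI ballI exI[of _ X] linear_frame_coform)
  fix i j assume ij: "i \<in> {1..n}" "j \<in> {1..n}"
  have orth: "g (X i) (X j) = (if i = j then 1/2 else 0)" "g (X j) (X i) = (if i = j then 1/2 else 0)"
    "g (X i) (J (X j)) = 0" "g (X j) (J (X i)) = 0"
    using assms ij by (auto simp: unitary_frame_def)
  then show "gC g (e10 J (X i)) (cconj (e10 J (X j))) = (if i = j then 1 else 0)"
    and "fC (frame_coform X i) (e10 J (X j)) = (if i = j then 1 else 0)"
    and "fC (frame_coform X i) (cconj (e10 J (X j))) = 0"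
    by (simp_all add: gC_def fC_def e10_def cconj_def frame_coform_def complex_eq_iff g_J_left)
qed

end

locale almost_abelian_frame = hermitian_metric g J
  for g :: "'a::euclidean_space \<Rightarrow> 'a \<Rightarrow> real" and J +
  fixes br :: "'a \<Rightarrow> 'a \<Rightarrow> 'a" and h :: "'a set" and n :: nat and X :: "nat \<Rightarrow> 'a"
  assumes bilinear_br: "bilinear br" and br_antisym: "br x y = - br y x"
    and integrable: "br x y - br (J x) (J y) + J (br (J x) y) + J (br x (J y)) = 0"
    and ideal: "x \<in> h \<Longrightarrow> br x y \<in> h" and abelian: "x \<in> h \<Longrightarrow> y \<in> h \<Longrightarrow> br x y = 0"
    and dim: "DIM('a) = 2 * n" and frame: "unitary_frame n X"
    and mem_h_iff: "x \<in> h \<longleftrightarrow> g x (X 1) = 0"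
begin

abbreviation \<phi> :: "nat \<Rightarrow> 'a \<Rightarrow> complex" where "\<phi> \<equiv> frame_coform X"

lemma br_simps [simp]:
  "br (x + y) z = br x z + br y z" "br z (x + y) = br z x + br z y"
  "br (x - y) z = br x z - br y z" "br z (x - y) = br z x - br z y"
  "br (c *\<^sub>R x) z = c *\<^sub>R br x z" "br z (c *\<^sub>R x) = c *\<^sub>R br z x"
  using bilinear_br by (simp_all add: bilinear_ladd bilinear_radd bilinear_lsub bilinear_rsub
      bilinear_lmul bilinear_rmul)

lemma br_self [simp]: "br x x = 0"
proof -
  have "(2::real) *\<^sub>R br x x = 0"
    using br_antisym[of x x] by (simp add: scaleR_2 eq_neg_iff_add_eq_0)
  then show ?thesis by simp
qed

lemma br_left_ideal: "y \<in> h \<Longrightarrow> br x y \<in> h"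
  using ideal[of y x] br_antisym[of x y] mem_h_iff by simp

lemma n_pos: "1 \<le> n"
  using dim DIM_positive[where 'a='a] by linarith

lemma J_X1_in_h: "J (X 1) \<in> h"
  by (simp add: mem_h_iff)

lemma frame_in_h:
  assumes "k \<in> {2..n}"
  shows "X k \<in> h" and "J (X k) \<in> h"
  using frame assms n_pos g_sym[of "J (X k)" "X 1"]
  by (auto simp: mem_h_iff unitary_frame_def)

text \<open>Integrability, with the \<open>[J X\<^sub>1, -]\<close> terms killed because \<open>J X\<^sub>1 \<in> h\<close>.\<close>
lemma br_X1_J:
  assumes "z \<in> h" and "J z \<in> h"
  shows "br (X 1) (J z) = J (br (X 1) z)"
proof -
  have "br (X 1) z + J (br (X 1) (J z)) = 0"
    using integrable[of "X 1" z] abelian[OF J_X1_in_h assms(1)] abelian[OF J_X1_in_h assms(2)]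
    by simp
  then have "J (br (X 1) z + J (br (X 1) (J z))) = 0" by simp
  then show ?thesis by (simp add: algebra_simps)
qed

definition h_part :: "'a \<Rightarrow> 'a" where
  "h_part x = x - (2 * g x (X 1)) *\<^sub>R X 1"

lemma h_part_in_h: "h_part x \<in> h"
  using frame n_pos by (simp add: mem_h_iff h_part_def unitary_frame_def)

lemma br_eq_h_part:
  "br x y = (2 * g x (X 1)) *\<^sub>R br (X 1) (h_part y) - (2 * g y (X 1)) *\<^sub>R br (X 1) (h_part x)"
proof -
  have "br x y = br ((2 * g x (X 1)) *\<^sub>R X 1 + h_part x) ((2 * g y (X 1)) *\<^sub>R X 1 + h_part y)"
    by (simp add: h_part_def)
  then show ?thesis
    using abelian[OF h_part_in_h h_part_in_h] br_antisym[of "h_part x" "X 1"] by simp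
qed

lemma h_part_expansion:
  "h_part x = (2 * g x (J (X 1))) *\<^sub>R J (X 1) +
     (\<Sum>k=2..n. (2 * g x (X k)) *\<^sub>R X k + (2 * g x (J (X k))) *\<^sub>R J (X k))"
proof -
  have "x = (\<Sum>k=1..n. (2 * g x (X k)) *\<^sub>R X k + (2 * g x (J (X k))) *\<^sub>R J (X k))"
    by (rule unitary_frame_expansion[OF dim frame])
  also have "\<dots> = (2 * g x (X 1)) *\<^sub>R X 1 + (2 * g x (J (X 1))) *\<^sub>R J (X 1) +
      (\<Sum>k=2..n. (2 * g x (X k)) *\<^sub>R X k + (2 * g x (J (X k))) *\<^sub>R J (X k))"
    using sum.atLeast_Suc_atMost[OF n_pos] by (simp add: numeral_2_eq_2)
  finally show ?thesis by (simp add: h_part_def algebra_simps)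
qed

lemma coform_br_X1_J_pair:
  assumes "z \<in> h" and "J z \<in> h"
  shows "\<phi> i (br (X 1) (a *\<^sub>R z + b *\<^sub>R J z)) = (of_real a + \<i> * of_real b) * \<phi> i (br (X 1) z)"
proof -
  have "\<phi> i (br (X 1) (J z)) = \<i> * \<phi> i (br (X 1) z)"
    by (simp only: br_X1_J[OF assms] frame_coform_J)
  then show ?thesis by (simp add: frame_coform_add frame_coform_scaleR algebra_simps)
qed

lemma coform_br_X1_h_part:
  "\<phi> i (br (X 1) (h_part x)) = of_real (2 * g x (J (X 1))) * \<phi> i (br (X 1) (J (X 1))) +
     (\<Sum>k=2..n. 2 * \<phi> k x * \<phi> i (br (X 1) (X k)))"
proof -
  have lin: "linear (\<lambda>z. \<phi> i (br (X 1) z))"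
    using bilinear_br linear_frame_coform
    by (simp add: bilinear_def linear_compose[unfolded o_def])
  have "\<phi> i (br (X 1) ((2 * g x (X k)) *\<^sub>R X k + (2 * g x (J (X k))) *\<^sub>R J (X k)))
      = 2 * \<phi> k x * \<phi> i (br (X 1) (X k))" if "k \<in> {2..n}" for k
    unfolding coform_br_X1_J_pair[OF frame_in_h[OF that]] frame_coform_def[of X k x]
    by (simp add: algebra_simps)
  then show ?thesis
    unfolding h_part_expansion linear_add[OF lin] linear_sum[OF lin]
    by (simp add: frame_coform_scaleR)
qed

lemma coform_1_vanishes:
  assumes "w \<in> h" and "J w \<in> h"
  shows "\<phi> 1 w = 0"
  using assms by (simp add: mem_h_iff frame_coform_def g_J_right)

lemma dform_frame_coform:
  "dform br (\<phi> i) x y =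
     - (2 * \<i> * \<phi> i (br (X 1) (J (X 1)))) * wedge (\<phi> 1) (cform (\<phi> 1)) x y
     + (\<Sum>j=2..n. (-2 * \<phi> i (br (X 1) (X j))) * wedge (\<lambda>z. \<phi> 1 z + cform (\<phi> 1) z) (\<phi> j) x y)"
proof -
  define S where "S x = (\<Sum>k=2..n. 2 * \<phi> k x * \<phi> i (br (X 1) (X k)))" for x
  have wedge_11: "wedge (\<phi> 1) (cform (\<phi> 1)) x y =
      2 * \<i> * of_real (g x (J (X 1)) * g y (X 1) - g x (X 1) * g y (J (X 1)))"
    by (simp add: wedge_def cform_def frame_coform_def complex_eq_iff algebra_simps)
  have real_part: "\<phi> 1 z + cform (\<phi> 1) z = of_real (2 * g z (X 1))" for z
    by (simp add: cform_def frame_coform_def complex_eq_iff)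
  have "(\<Sum>j=2..n. (-2 * \<phi> i (br (X 1) (X j))) * wedge (\<lambda>z. \<phi> 1 z + cform (\<phi> 1) z) (\<phi> j) x y)
      = (\<Sum>j=2..n. of_real (2 * g y (X 1)) * (2 * \<phi> j x * \<phi> i (br (X 1) (X j)))
          - of_real (2 * g x (X 1)) * (2 * \<phi> j y * \<phi> i (br (X 1) (X j))))"
    unfolding wedge_def real_part by (rule sum.cong) (simp_all add: algebra_simps)
  also have "\<dots> = of_real (2 * g y (X 1)) * S x - of_real (2 * g x (X 1)) * S y"
    by (simp add: S_def sum_subtractf sum_distrib_left)
  finally have wedge_sum: "(\<Sum>j=2..n. (-2 * \<phi> i (br (X 1) (X j))) *
      wedge (\<lambda>z. \<phi> 1 z + cform (\<phi> 1) z) (\<phi> j) x y)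
      = of_real (2 * g y (X 1)) * S x - of_real (2 * g x (X 1)) * S y" .
  have "dform br (\<phi> i) x y = of_real (2 * g y (X 1)) * \<phi> i (br (X 1) (h_part x))
      - of_real (2 * g x (X 1)) * \<phi> i (br (X 1) (h_part y))"
    unfolding dform_def br_eq_h_part[of x y]
    by (simp add: frame_coform_diff frame_coform_scaleR)
  then show ?thesis
    unfolding coform_br_X1_h_part wedge_11 wedge_sum S_def[symmetric]
    by (simp add: algebra_simps)
qed

lemma dform_frame_coform_1:
  "dform br (\<phi> 1) x y =
     - of_real (- 2 * g (br (X 1) (J (X 1))) (J (X 1))) * wedge (\<phi> 1) (cform (\<phi> 1)) x y"
proof -
  have "\<phi> 1 (br (X 1) (X j)) = 0" if "j \<in> {2..n}" for j
    using frame_in_h[OF that] br_X1_J[OF frame_in_h[OF that]]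
    by (intro coform_1_vanishes) (metis br_left_ideal)+
  moreover have "\<phi> 1 (br (X 1) (J (X 1))) = \<i> * of_real (g (br (X 1) (J (X 1))) (J (X 1)))"
    using br_left_ideal[OF J_X1_in_h] by (simp add: frame_coform_def mem_h_iff)
  ultimately show ?thesis
    using dform_frame_coform[of 1 x y] by simp
qed

end

theorem lemma5:
  fixes br :: "'a::euclidean_space \<Rightarrow> 'a \<Rightarrow> 'a" and J :: "'a \<Rightarrow> 'a"
    and g :: "'a \<Rightarrow> 'a \<Rightarrow> real" and n :: nat
  assumes "lie_algebra br" and "almost_abelian br" and "DIM('a) = 2 * n"
    and "hermitian_structure br J g"
  shows "\<exists>(\<phi> :: nat \<Rightarrow> 'a \<Rightarrow> complex) (lam :: real) (v :: nat \<Rightarrow> complex) (A :: nat \<Rightarrow> nat \<Rightarrow> complex).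
    unitary_coframe J g n \<phi> \<and>
    (\<forall>x y. dform br (\<phi> 1) x y = - complex_of_real lam * wedge (\<phi> 1) (cform (\<phi> 1)) x y) \<and>
    (\<forall>i\<in>{2..n}. \<forall>x y. dform br (\<phi> i) x y =
        - cnj (v i) * wedge (\<phi> 1) (cform (\<phi> 1)) x y
        + (\<Sum>j=2..n. cnj (A i j) * wedge (\<lambda>z. \<phi> 1 z + cform (\<phi> 1) z) (\<phi> j) x y))"
proof -
  obtain h where h: "subspace h" "dim h + 1 = DIM('a)"
    and ideal: "\<And>x y. x \<in> h \<Longrightarrow> br x y \<in> h" and abelian: "\<And>x y. x \<in> h \<Longrightarrow> y \<in> h \<Longrightarrow> br x y = 0"
    using assms(2) unfolding almost_abelian_def by blast
  have metric: "hermitian_metric g J"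
    and integrable: "\<And>x y. br x y - br (J x) (J y) + J (br (J x) y) + J (br x (J y)) = 0"
    using assms(4) unfolding hermitian_structure_def hermitian_metric_def by blast+
  obtain X where X: "hermitian_metric.unitary_frame g J n X" "\<And>x. x \<in> h \<longleftrightarrow> g x (X 1) = 0"
    using hermitian_metric.adapted_unitary_frame_exists[OF metric h assms(3)] by blast
  have "bilinear br" and "\<And>x y. br x y = - br y x"
    using assms(1) unfolding lie_algebra_def by blast+
  then interpret almost_abelian_frame g J br h n X
    using integrable ideal abelian assms(3) X
    by (intro almost_abelian_frame.intro[OF metric] almost_abelian_frame_axioms.intro) blast+
  show ?thesis
  proof (intro exI[of _ \<phi>] exI[of _ "- 2 * g (br (X 1) (J (X 1))) (J (X 1))"]
      exI[of _ "\<lambda>i. cnj (2 * \<i> * \<phi> i (br (X 1) (J (X 1))))"]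
      exI[of _ "\<lambda>i j. cnj (- 2 * \<phi> i (br (X 1) (X j)))"] conjI allI ballI)
    show "unitary_coframe J g n \<phi>" by (rule unitary_coframe_frame_coform[OF frame])
    show "dform br (\<phi> 1) x y =
        - of_real (- 2 * g (br (X 1) (J (X 1))) (J (X 1))) * wedge (\<phi> 1) (cform (\<phi> 1)) x y" for x y
      by (rule dform_frame_coform_1)
  qed (simp only: dform_frame_coform complex_cnj_cnj)
qed

end
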